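(* EDHNN is a special case of the MultiSet framework: there is a choice of the MultiSet functions $f_{\mathcal{V}\to\mathcal{E}}, f_{\mathcal{E}\to\mathcal{V}}, f_{\mathcal{V}\to\mathcal{V}}$ such that the MultiSet scheme reproduces the hyperedge representations and the final node representations computed by EDHNN.
   Context: A hypergraph is $\mathcal{G}=(\mathcal{V},\mathcal{E})$ with each hyperedge $e\in\mathcal{E}$ a subset of $\mathcal{V}$; $\mathcal{E}_v=\{e\in\mathcal{E}:v\in e\}$ and $d_v=|\mathcal{E}_v|$. A function is called a multiset function if it is permutation invariant with respect to each of its (set-valued) arguments in turn. MultiSet framework: each hyperedge $e$ has a representation $\bm z_e^{(t)}\in\mathbb{R}^d$ at step $t$; each node $v$ has one representation $\bm x_{v,e}^{(t)}\in\mathbb{R}^f$ for each hyperedge $e\in\mathcal{E}_v$, and $\mathbb{X}_v^{(t)}=\{\bm x_{v,e}^{(t)}\}_{e\in\mathcal{E}_v}$. The updates are $$\bm z_e^{(t+1)}=f_{\mathcal{V}\to\mathcal{E}}\big(\{\mathbb{X}_u^{(t)}\}_{u\in e};\ \bm z_e^{(t)}\big),\qquad \bm x_{v,e}^{(t+1)}=f_{\mathcal{E}\to\mathcal{V}}\big(\{\bm z_{e}^{(t+1)}\}_{e\in\mathcal{E}_v};\ \{\mathbb{X}_v^{(k)}\}_{k=0}^{t}\big),$$ and after $T$ steps a readout $\bm x_v^{(T)}=f_{\mathcal{V}\to\mathcal{V}}\big(\{\mathbb{X}_v^{(k)}\}_{k=0}^{T}\big)$, where $f_{\mathcal{V}\to\mathcal{E}},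 f_{\mathcal{E}\to\mathcal{V}}$ are multiset functions with respect to their first input and $f_{\mathcal{V}\to\mathcal{V}}$ is a multiset function. EDHNN is the propagation scheme with a single representation $\bm x_v^{(t)}$ per node and updates $$\bm z_e^{(t+1)}=\sum_{u\in e}\hat\phi(\bm x_u^{(t)}),\qquad \bm x_v^{(t+1)}=\hat\psi\Big(\bm x_v^{(t)},\ \sum_{e\in\mathcal{E}_v}\hat\rho\big(\bm x_v^{(t)},\bm z_e^{(t+1)}\big),\ \bm x_v^{(0)},\ d_v\Big),$$ where $\hat\phi,\hat\psi,\hat\rho$ are MLPs shared across layers, and its output after $T$ steps is $\bm x_v^{(T)}$. *)

theory Defs
  imports Complex_Main "HOL-Library.Multiset"
begin

definition inc :: "'v set set \<Rightarrow> 'v \<Rightarrow> 'v set set" where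
  "inc E v = {e \<in> E. v \<in> e}"

definition deg :: "'v set set \<Rightarrow> 'v \<Rightarrow> nat" where
  "deg E v = card (inc E v)"

text \<open>phi, rho, psi are the (layer-shared) MLPs; x0 the initial node features.
  edhnn_x ... t v is the node representation x_v^(t).\<close>

primrec edhnn_x ::
  "('x \<Rightarrow> 'z::comm_monoid_add) \<Rightarrow> ('x \<Rightarrow> 'z \<Rightarrow> 'm::comm_monoid_add) \<Rightarrow>
   ('x \<Rightarrow> 'm \<Rightarrow> 'x \<Rightarrow> real \<Rightarrow> 'x) \<Rightarrow> 'v set set \<Rightarrow> ('v \<Rightarrow> 'x) \<Rightarrow> nat \<Rightarrow> 'v \<Rightarrow> 'x" where
  "edhnn_x \<phi> \<rho> \<psi> E x0 0 = x0"
| "edhnn_x \<phi> \<rho> \<psi> E x0 (Suc t) =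
     (let x = edhnn_x \<phi> \<rho> \<psi> E x0 t;
          z = (\<lambda>e. \<Sum>u\<in>e. \<phi> (x u))
      in (\<lambda>v. \<psi> (x v) (\<Sum>e\<in>inc E v. \<rho> (x v) (z e)) (x0 v) (real (deg E v))))"

text \<open>edhnn_z ... (Suc t) e is the hyperedge representation z_e^(t+1) = sum over u in e of phi(x_u^(t)).
  (The value at 0 is irrelevant; EDHNN has no z^(0).)\<close>

definition edhnn_z ::
  "('x \<Rightarrow> 'z::comm_monoid_add) \<Rightarrow> ('x \<Rightarrow> 'z \<Rightarrow> 'm::comm_monoid_add) \<Rightarrow>
   ('x \<Rightarrow> 'm \<Rightarrow> 'x \<Rightarrow> real \<Rightarrow> 'x) \<Rightarrow> 'v set set \<Rightarrow> ('v \<Rightarrow> 'x) \<Rightarrow> nat \<Rightarrow> 'v set \<Rightarrow> 'z" where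
  "edhnn_z \<phi> \<rho> \<psi> E x0 t e = (\<Sum>u\<in>e. \<phi> (edhnn_x \<phi> \<rho> \<psi> E x0 (t - 1) u))"

text \<open>A state at step t: hyperedge representations z :: 'v set => 'z and node-hyperedge
  representations x v e = x_{v,e}.
  Using HOL multisets as the set-valued inputs makes f_VE, f_EV (in their first argument)
  and f_VV multiset functions by construction.\<close>

definition X_of :: "'v set set \<Rightarrow> ('v \<Rightarrow> 'v set \<Rightarrow> 'x) \<Rightarrow> 'v \<Rightarrow> 'x multiset" where
  "X_of E x v = image_mset (\<lambda>e. x v e) (mset_set (inc E v))"

text \<open>ms_hist fVE fEV E z0 x0 t = [state_0, ..., state_t].
  fVE ({X_u^(t)}_{u in e}) (z_e^(t)) and fEV ({z_e^(t+1)}_{e in E_v}) [X_v^(0),...,X_v^(t)].\<close>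

primrec ms_hist ::
  "('x multiset multiset \<Rightarrow> 'z \<Rightarrow> 'z) \<Rightarrow> ('z multiset \<Rightarrow> 'x multiset list \<Rightarrow> 'x) \<Rightarrow>
   'v set set \<Rightarrow> ('v set \<Rightarrow> 'z) \<Rightarrow> ('v \<Rightarrow> 'v set \<Rightarrow> 'x) \<Rightarrow> nat \<Rightarrow>
   (('v set \<Rightarrow> 'z) \<times> ('v \<Rightarrow> 'v set \<Rightarrow> 'x)) list" where
  "ms_hist fVE fEV E z0 x0 0 = [(z0, x0)]"
| "ms_hist fVE fEV E z0 x0 (Suc t) =
     (let H = ms_hist fVE fEV E z0 x0 t;
          z = fst (last H); x = snd (last H);
          z' = (\<lambda>e. fVE (image_mset (\<lambda>u. X_of E x u) (mset_set e)) (z e));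
          x' = (\<lambda>v e. fEV (image_mset z' (mset_set (inc E v)))
                           (map (\<lambda>s. X_of E (snd s) v) H))
      in H @ [(z', x')])"

definition ms_out ::
  "('x multiset multiset \<Rightarrow> 'z \<Rightarrow> 'z) \<Rightarrow> ('z multiset \<Rightarrow> 'x multiset list \<Rightarrow> 'x) \<Rightarrow>
   ('x multiset list \<Rightarrow> 'x) \<Rightarrow>
   'v set set \<Rightarrow> ('v set \<Rightarrow> 'z) \<Rightarrow> ('v \<Rightarrow> 'v set \<Rightarrow> 'x) \<Rightarrow> nat \<Rightarrow> 'v \<Rightarrow> 'x" where
  "ms_out fVE fEV fVV E z0 x0 T v =
     fVV (map (\<lambda>s. X_of E (snd s) v) (ms_hist fVE fEV E z0 x0 T))"

end

theory Submission
  imports Defs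
begin

text \<open>Start with \<open>x\<^sub>v\<^sub>,\<^sub>e = x\<^sub>v\<close> for every hyperedge \<open>e\<close>, and let every step produce node
  representations that again do not depend on \<open>e\<close>. Then \<open>X\<^sub>v\<close> consists of \<open>d\<^sub>v\<close> copies of
  \<open>x\<^sub>v\<close>, so for a non-isolated node both \<open>x\<^sub>v\<close> (the unique element) and \<open>d\<^sub>v\<close> (the size of
  the multiset of incident hyperedge representations) can be read off the multiset inputs. The
  MultiSet functions just recover these values and evaluate the EDHNN update formulas on them:
  \<open>f_VE\<close> sums \<open>\<phi>\<close>, \<open>f_EV\<close> applies \<open>\<psi>\<close> to the current (last) and initial (first) entries of
  the history, and \<open>f_VV\<close> returns the last one.\<close>

definition the_elem_mset :: "'a multiset \<Rightarrow> 'a" where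
  "the_elem_mset X = the_elem (set_mset X)"

lemma the_elem_mset_replicate_mset [simp]:
  "n > 0 \<Longrightarrow> the_elem_mset (replicate_mset n c) = c"
  by (simp add: the_elem_mset_def)

lemma X_of_const:
  assumes "\<And>e. x v e = c"
  shows "X_of E x v = replicate_mset (deg E v) c"
  unfolding X_of_def deg_def assms by (simp add: image_mset_const_eq)

lemma deg_pos:
  assumes "finite E" and "inc E v \<noteq> {}"
  shows "deg E v > 0"
  using assms by (simp add: deg_def inc_def card_gt_0_iff)

lemma the_elem_mset_X_of_const:
  assumes "finite E" and "inc E v \<noteq> {}" and "\<And>e. x v e = c"
  shows "the_elem_mset (X_of E x v) = c"
  using assms by (simp add: X_of_const deg_pos)

definition edhnn_fVE :: "('x \<Rightarrow> 'z::comm_monoid_add) \<Rightarrow> 'x multiset multiset \<Rightarrow> 'z \<Rightarrow> 'z" where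
  "edhnn_fVE \<phi> Xs z = (\<Sum>X\<in>#Xs. \<phi> (the_elem_mset X))"

definition edhnn_fEV ::
  "('x \<Rightarrow> 'z \<Rightarrow> 'm::comm_monoid_add) \<Rightarrow> ('x \<Rightarrow> 'm \<Rightarrow> 'x \<Rightarrow> real \<Rightarrow> 'x) \<Rightarrow>
   'z multiset \<Rightarrow> 'x multiset list \<Rightarrow> 'x" where
  "edhnn_fEV \<rho> \<psi> Zs Hs =
     (let x = the_elem_mset (last Hs)
      in \<psi> x (\<Sum>z\<in>#Zs. \<rho> x z) (the_elem_mset (hd Hs)) (real (size Zs)))"

definition edhnn_fVV :: "'x multiset list \<Rightarrow> 'x" where
  "edhnn_fVV Hs = the_elem_mset (last Hs)"

lemma edhnn_fVE_X_of:
  assumes "finite E" and "e \<in> E" and "\<And>u e'. u \<in> e \<Longrightarrow> xs u e' = x u"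
  shows "edhnn_fVE \<phi> (image_mset (X_of E xs) (mset_set e)) z = (\<Sum>u\<in>e. \<phi> (x u))"
proof -
  have "edhnn_fVE \<phi> (image_mset (X_of E xs) (mset_set e)) z =
      (\<Sum>u\<in>e. \<phi> (the_elem_mset (X_of E xs u)))"
    by (simp add: edhnn_fVE_def sum_unfold_sum_mset image_mset.compositionality o_def)
  also have "\<dots> = (\<Sum>u\<in>e. \<phi> (x u))"
    using assms by (intro sum.cong refl arg_cong[where f = \<phi>] the_elem_mset_X_of_const)
      (auto simp: inc_def)
  finally show ?thesis .
qed

lemma edhnn_fEV_image_mset:
  assumes "finite E"
  shows "edhnn_fEV \<rho> \<psi> (image_mset zs (mset_set (inc E v))) Hs =
    (let x = the_elem_mset (last Hs)
     in \<psi> x (\<Sum>e\<in>inc E v. \<rho> x (zs e)) (the_elem_mset (hd Hs)) (real (deg E v)))"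
  using assms
  by (simp add: edhnn_fEV_def deg_def sum_unfold_sum_mset image_mset.compositionality o_def)

lemma length_ms_hist [simp]: "length (ms_hist fVE fEV E z0 x0 t) = Suc t"
  by (induction t) (simp_all add: Let_def)

lemma ms_hist_nonempty [simp]: "ms_hist fVE fEV E z0 x0 t \<noteq> []"
  by (simp flip: length_greater_0_conv)

lemma hd_ms_hist [simp]: "hd (ms_hist fVE fEV E z0 x0 t) = (z0, x0)"
  by (induction t) (simp_all add: Let_def)

lemma nth_ms_hist: "k \<le> t \<Longrightarrow> ms_hist fVE fEV E z0 x0 t ! k = last (ms_hist fVE fEV E z0 x0 k)"
proof (induction t)
  case 0
  then show ?case by simp
next
  case (Suc t)
  then show ?case
    by (cases "k = Suc t") (simp_all add: Let_def nth_append)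
qed

lemma last_ms_hist_Suc:
  "last (ms_hist fVE fEV E z0 x0 (Suc t)) =
    (let H = ms_hist fVE fEV E z0 x0 t;
         z' = (\<lambda>e. fVE (image_mset (X_of E (snd (last H))) (mset_set e)) (fst (last H) e))
     in (z', \<lambda>v e. fEV (image_mset z' (mset_set (inc E v))) (map (\<lambda>s. X_of E (snd s) v) H)))"
  by (simp add: Let_def)

context
  fixes \<phi> :: "'x \<Rightarrow> 'z::comm_monoid_add"
    and \<rho> :: "'x \<Rightarrow> 'z \<Rightarrow> 'm::comm_monoid_add"
    and \<psi> :: "'x \<Rightarrow> 'm \<Rightarrow> 'x \<Rightarrow> real \<Rightarrow> 'x"
    and E :: "'v set set"
    and x0 :: "'v \<Rightarrow> 'x"
    and z0 :: "'v set \<Rightarrow> 'z"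
  assumes finite_E: "finite E"
begin

abbreviation edhnn_hist :: "nat \<Rightarrow> (('v set \<Rightarrow> 'z) \<times> ('v \<Rightarrow> 'v set \<Rightarrow> 'x)) list" where
  "edhnn_hist \<equiv> ms_hist (edhnn_fVE \<phi>) (edhnn_fEV \<rho> \<psi>) E z0 (\<lambda>v e. x0 v)"

lemma edge_rep_edhnn_hist:
  assumes "\<And>u e'. inc E u \<noteq> {} \<Longrightarrow> snd (last (edhnn_hist t)) u e' = edhnn_x \<phi> \<rho> \<psi> E x0 t u"
    and "e \<in> E"
  shows "fst (last (edhnn_hist (Suc t))) e = edhnn_z \<phi> \<rho> \<psi> E x0 (Suc t) e"
proof -
  have "\<And>u e'. u \<in> e \<Longrightarrow> snd (last (edhnn_hist t)) u e' = edhnn_x \<phi> \<rho> \<psi> E x0 t u"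
    using \<open>e \<in> E\<close> by (intro assms(1)) (auto simp: inc_def)
  then show ?thesis
    using finite_E \<open>e \<in> E\<close>
    by (simp add: last_ms_hist_Suc Let_def edhnn_fVE_X_of edhnn_z_def)
qed

lemma node_rep_edhnn_hist:
  "inc E v \<noteq> {} \<Longrightarrow> snd (last (edhnn_hist t)) v e = edhnn_x \<phi> \<rho> \<psi> E x0 t v"
proof (induction t arbitrary: v e)
  case 0
  then show ?case by simp
next
  case (Suc t)
  let ?X = "\<lambda>s. X_of E (snd s) v"
  have current: "the_elem_mset (last (map ?X (edhnn_hist t))) = edhnn_x \<phi> \<rho> \<psi> E x0 t v"
    using Suc finite_E by (simp add: last_map the_elem_mset_X_of_const)
  have initial: "the_elem_mset (hd (map ?X (edhnn_hist t))) = x0 v"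
    using Suc.prems finite_E by (simp add: hd_map the_elem_mset_X_of_const)
  have edges: "fst (last (edhnn_hist (Suc t))) e' = edhnn_z \<phi> \<rho> \<psi> E x0 (Suc t) e'"
    if "e' \<in> inc E v" for e'
    using that Suc.IH by (intro edge_rep_edhnn_hist) (auto simp: inc_def)
  show ?case
    using edges
    by (simp add: last_ms_hist_Suc[of _ _ _ _ _ t] edhnn_fEV_image_mset[OF finite_E]
        current initial edhnn_z_def Let_def deg_def cong: sum.cong)
qed

end

theorem proposition3:
  fixes \<phi> :: "'x::real_vector \<Rightarrow> 'z::real_vector"
    and \<rho> :: "'x \<Rightarrow> 'z \<Rightarrow> 'm::real_vector"
    and \<psi> :: "'x \<Rightarrow> 'm \<Rightarrow> 'x \<Rightarrow> real \<Rightarrow> 'x"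
  shows "\<exists>(fVE :: 'x multiset multiset \<Rightarrow> 'z \<Rightarrow> 'z)
            (fEV :: 'z multiset \<Rightarrow> 'x multiset list \<Rightarrow> 'x)
            (fVV :: 'x multiset list \<Rightarrow> 'x).
          \<forall>(V :: 'v set) (E :: 'v set set) (x0 :: 'v \<Rightarrow> 'x) (z0 :: 'v set \<Rightarrow> 'z) (T :: nat).
            finite V \<longrightarrow> (\<forall>e\<in>E. e \<subseteq> V) \<longrightarrow> (\<forall>v\<in>V. inc E v \<noteq> {}) \<longrightarrow>
            (\<forall>t\<in>{1..T}. \<forall>e\<in>E.
                fst (ms_hist fVE fEV E z0 (\<lambda>v e. x0 v) T ! t) e = edhnn_z \<phi> \<rho> \<psi> E x0 t e)
            \<and> (\<forall>v\<in>V. ms_out fVE fEV fVV E z0 (\<lambda>v e. x0 v) T v = edhnn_x \<phi> \<rho> \<psi> E x0 T v)"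
proof (intro exI allI impI conjI ballI)
  fix V :: "'v set" and E :: "'v set set" and x0 :: "'v \<Rightarrow> 'x" and z0 T
  assume "finite V" and "\<forall>e\<in>E. e \<subseteq> V" and non_isolated: "\<forall>v\<in>V. inc E v \<noteq> {}"
  then have finite_E: "finite E"
    by (meson Pow_iff finite_Pow_iff finite_subset subsetI)
  note node_rep = node_rep_edhnn_hist[OF finite_E]
  show "fst (edhnn_hist \<phi> \<rho> \<psi> E x0 z0 T ! t) e = edhnn_z \<phi> \<rho> \<psi> E x0 t e"
    if "t \<in> {1..T}" and "e \<in> E" for t e
  proof -
    obtain s where t: "t = Suc s" and "Suc s \<le> T" using \<open>t \<in> {1..T}\<close> by (cases t) auto
    then have "edhnn_hist \<phi> \<rho> \<psi> E x0 z0 T ! t = last (edhnn_hist \<phi> \<rho> \<psi> E x0 z0 (Suc s))"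
      by (simp add: nth_ms_hist)
    then show ?thesis
      using edge_rep_edhnn_hist[OF finite_E node_rep \<open>e \<in> E\<close>] by (simp add: t)
  qed
  show "ms_out (edhnn_fVE \<phi>) (edhnn_fEV \<rho> \<psi>) edhnn_fVV E z0 (\<lambda>v e. x0 v) T v =
      edhnn_x \<phi> \<rho> \<psi> E x0 T v" if "v \<in> V" for v
  proof -
    have "inc E v \<noteq> {}" using that non_isolated by blast
    then have "the_elem_mset (X_of E (snd (last (edhnn_hist \<phi> \<rho> \<psi> E x0 z0 T))) v) =
        edhnn_x \<phi> \<rho> \<psi> E x0 T v"
      by (intro the_elem_mset_X_of_const finite_E node_rep)
    then show ?thesis by (simp add: ms_out_def edhnn_fVV_def last_map)
  qed
qed

end
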